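(* Let $\mu\in\mathbb P^\vee$ and let $V$ be a top graded $Y_\mu(\mathfrak g)$-module. Then $V$ is of co-highest $\ell$-weight if and only if its top weight space equals the subspace $\{v\in V: x^+_{i,n}v=0 \text{ for all } (i,n)\in I\times\mathbb N\}$.
   Context: Let $\mathfrak g$ be a finite-dimensional complex simple Lie algebra with Cartan subalgebra $\mathfrak h$, Dynkin nodes $I$, simple roots $\alpha_i$, invariant form $(\,,\,)$ on $\mathfrak h^*$ with $d_i=(\alpha_i,\alpha_i)/2$ coprime positive integers, $c_{ij}=2(\alpha_i,\alpha_j)/(\alpha_i,\alpha_i)$, $d_{ij}=(\alpha_i,\alpha_j)/2$, fundamental coweights $\varpi_i^\vee$ ($\langle\varpi_i^\vee,\alpha_j\rangle=\delta_{ij}$), $\mathbb P^\vee=\bigoplus\mathbb Z\varpi_i^\vee$, $\mathbb Q_-=-\bigoplus\mathbb N\alpha_i$. For $\mu\in\mathbb P^\vee$, $Y_\mu(\mathfrak g)$ is the algebra generated by $x^\pm_{i,n},\xi_{i,p}$ ($i\in I,n\in\mathbb N,p\in\mathbb Z$) with relations $[\xi_{i,p},\xi_{j,q}]=0$, $[x^+_{i,m},x^-_{j,n}]=\delta_{ij}\xi_{i,m+n}$, $[\xi_{i,p+1},x^\pm_{j,n}]-[\xi_{i,p},x^\pm_{j,n+1}]=\pm d_{ij}(\xi_{i,p}x^\pm_{j,n}+x^\pm_{j,n}\xi_{i,p})$, $[x^\pm_{i,m+1},x^\pm_{j,n}]-[x^\pm_{i,m},x^\pm_{j,n+1}]=\pm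 d_{ij}(x^\pm_{i,m}x^\pm_{j,n}+x^\pm_{j,n}x^\pm_{i,m})$, $\mathrm{ad}_{x^\pm_{i,0}}^{1-c_{ij}}(x^\pm_{j,0})=0$ ($i\ne j$), $\xi_{i,-\langle\mu,\alpha_i\rangle-1}=1$, $\xi_{i,p}=0$ for $p<-\langle\mu,\alpha_i\rangle-1$. For a $Y_\mu(\mathfrak g)$-module $V$ and $\beta\in\mathfrak h^*$, the weight space is $V_\beta=\{v: \xi_{i,-\langle\mu,\alpha_i\rangle}v=(\alpha_i,\beta)v\ \forall i\}$; $V$ is a weight module if it is the direct sum of its weight spaces. $V$ is top graded if it is a weight module and there is $\lambda\in\mathfrak h^*$ with all weights in $\lambda+\mathbb Q_-$ and $\dim V_\lambda=1$; $V_\lambda$ is the top weight space. $V$ is of co-highest $\ell$-weight if it is top graded and its top weight space is contained in every nonzero submodule of $V$. *)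

theory Defs
  imports "HOL-Analysis.Analysis"
begin

text \<open>Cartan data of a finite-dimensional complex simple Lie algebra, given by the
  Gram matrix B i j = (alpha_i, alpha_j) of the simple roots, indexed by the finite
  type 'i of Dynkin nodes.  Here d_i = B i i / 2, c_ij = 2 B i j / B i i.\<close>

definition simple_cartan_datum :: "('i::finite \<Rightarrow> 'i \<Rightarrow> int) \<Rightarrow> bool" where
  "simple_cartan_datum B \<longleftrightarrow>
     (\<forall>i j. B i j = B j i) \<and>
     (\<forall>i. B i i > 0 \<and> even (B i i)) \<and>
     (\<forall>i j. i \<noteq> j \<longrightarrow> B i j \<le> 0 \<and> B i i dvd 2 * B i j) \<and>
     (\<forall>c :: 'i \<Rightarrow> real. (\<exists>i. c i \<noteq> 0) \<longrightarrow> (\<Sum>i\<in>UNIV. \<Sum>j\<in>UNIV. c i * c j * of_int (B i j)) > 0) \<and>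
     (\<forall>J :: 'i set. J \<noteq> {} \<and> J \<noteq> UNIV \<longrightarrow> (\<exists>j\<in>J. \<exists>k. k \<notin> J \<and> B j k \<noteq> 0)) \<and>
     Gcd (range (\<lambda>i. B i i div 2)) = 1"

definition cartan_entry :: "('i \<Rightarrow> 'i \<Rightarrow> int) \<Rightarrow> 'i \<Rightarrow> 'i \<Rightarrow> int" where
  "cartan_entry B i j = (2 * B i j) div (B i i)"

definition dd :: "('i \<Rightarrow> 'i \<Rightarrow> int) \<Rightarrow> 'i \<Rightarrow> 'i \<Rightarrow> complex" where
  "dd B i j = of_int (B i j) / 2"

definition comm :: "('v::ab_group_add \<Rightarrow> 'v) \<Rightarrow> ('v \<Rightarrow> 'v) \<Rightarrow> 'v \<Rightarrow> 'v" where
  "comm A C = (\<lambda>v. A (C v) - C (A v))"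

definition anticomm :: "('v::ab_group_add \<Rightarrow> 'v) \<Rightarrow> ('v \<Rightarrow> 'v) \<Rightarrow> 'v \<Rightarrow> 'v" where
  "anticomm A C = (\<lambda>v. A (C v) + C (A v))"

text \<open>The coweight mu is given by
  the integers mu i = <mu, alpha_i>.\<close>

definition yangian_module ::
  "('i::finite \<Rightarrow> 'i \<Rightarrow> int) \<Rightarrow> ('i \<Rightarrow> int) \<Rightarrow> (complex \<Rightarrow> 'v::ab_group_add \<Rightarrow> 'v)
   \<Rightarrow> ('i \<Rightarrow> nat \<Rightarrow> 'v \<Rightarrow> 'v) \<Rightarrow> ('i \<Rightarrow> nat \<Rightarrow> 'v \<Rightarrow> 'v) \<Rightarrow> ('i \<Rightarrow> int \<Rightarrow> 'v \<Rightarrow> 'v) \<Rightarrow> bool"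
where
  "yangian_module B mu sc xp xm xi \<longleftrightarrow>
     vector_space sc \<and>
     (\<forall>i n. Vector_Spaces.linear sc sc (xp i n)) \<and>
     (\<forall>i n. Vector_Spaces.linear sc sc (xm i n)) \<and>
     (\<forall>i p. Vector_Spaces.linear sc sc (xi i p)) \<and>
     (\<forall>i j p q. comm (xi i p) (xi j q) = (\<lambda>v. 0)) \<and>
     (\<forall>i j m n. comm (xp i m) (xm j n) = (if i = j then xi i (int (m + n)) else (\<lambda>v. 0))) \<and>
     (\<forall>i j p n. (\<lambda>v. comm (xi i (p + 1)) (xp j n) v - comm (xi i p) (xp j (n + 1)) v)
                = (\<lambda>v. sc (dd B i j) (anticomm (xi i p) (xp j n) v))) \<and>
     (\<forall>i j p n. (\<lambda>v. comm (xi i (p + 1)) (xm j n) v - comm (xi i p) (xm j (n + 1)) v)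
                = (\<lambda>v. sc (- dd B i j) (anticomm (xi i p) (xm j n) v))) \<and>
     (\<forall>i j m n. (\<lambda>v. comm (xp i (m + 1)) (xp j n) v - comm (xp i m) (xp j (n + 1)) v)
                = (\<lambda>v. sc (dd B i j) (anticomm (xp i m) (xp j n) v))) \<and>
     (\<forall>i j m n. (\<lambda>v. comm (xm i (m + 1)) (xm j n) v - comm (xm i m) (xm j (n + 1)) v)
                = (\<lambda>v. sc (- dd B i j) (anticomm (xm i m) (xm j n) v))) \<and>
     (\<forall>i j. i \<noteq> j \<longrightarrow>
        ((comm (xp i 0)) ^^ nat (1 - cartan_entry B i j)) (xp j 0) = (\<lambda>v. 0)) \<and>
     (\<forall>i j. i \<noteq> j \<longrightarrow>
        ((comm (xm i 0)) ^^ nat (1 - cartan_entry B i j)) (xm j 0) = (\<lambda>v. 0)) \<and>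
     (\<forall>i. xi i (- mu i - 1) = (\<lambda>v. v)) \<and>
     (\<forall>i p. p < - mu i - 1 \<longrightarrow> xi i p = (\<lambda>v. 0))"

text \<open>Elements beta of h^* are written in the basis of simple roots:
  beta = sum_j b j alpha_j, with b :: 'i => complex.  Then (alpha_i, beta) = sum_j b j B i j.\<close>

definition pair_root :: "('i::finite \<Rightarrow> 'i \<Rightarrow> int) \<Rightarrow> 'i \<Rightarrow> ('i \<Rightarrow> complex) \<Rightarrow> complex" where
  "pair_root B i b = (\<Sum>j\<in>UNIV. b j * of_int (B i j))"

definition weight_space ::
  "('i::finite \<Rightarrow> 'i \<Rightarrow> int) \<Rightarrow> ('i \<Rightarrow> int) \<Rightarrow> (complex \<Rightarrow> 'v \<Rightarrow> 'v)
   \<Rightarrow> ('i \<Rightarrow> int \<Rightarrow> 'v \<Rightarrow> 'v) \<Rightarrow> ('i \<Rightarrow> complex) \<Rightarrow> 'v set" where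
  "weight_space B mu sc xi beta = {v. \<forall>i. xi i (- mu i) v = sc (pair_root B i beta) v}"

definition weight_module ::
  "('i::finite \<Rightarrow> 'i \<Rightarrow> int) \<Rightarrow> ('i \<Rightarrow> int) \<Rightarrow> (complex \<Rightarrow> 'v::ab_group_add \<Rightarrow> 'v)
   \<Rightarrow> ('i \<Rightarrow> int \<Rightarrow> 'v \<Rightarrow> 'v) \<Rightarrow> bool" where
  "weight_module B mu sc xi \<longleftrightarrow>
     (\<forall>v. \<exists>S f. finite S \<and> (\<forall>beta\<in>S. f beta \<in> weight_space B mu sc xi beta)
                \<and> v = (\<Sum>beta\<in>S. f beta)) \<and>
     (\<forall>S f. finite S \<and> (\<forall>beta\<in>S. f beta \<in> weight_space B mu sc xi beta)
                \<and> (\<Sum>beta\<in>S. f beta) = 0 \<longrightarrow> (\<forall>beta\<in>S. f beta = 0))"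

definition top_graded_at ::
  "('i::finite \<Rightarrow> 'i \<Rightarrow> int) \<Rightarrow> ('i \<Rightarrow> int) \<Rightarrow> (complex \<Rightarrow> 'v::ab_group_add \<Rightarrow> 'v)
   \<Rightarrow> ('i \<Rightarrow> int \<Rightarrow> 'v \<Rightarrow> 'v) \<Rightarrow> ('i \<Rightarrow> complex) \<Rightarrow> bool" where
  "top_graded_at B mu sc xi lam \<longleftrightarrow>
     weight_module B mu sc xi \<and>
     (\<forall>beta. weight_space B mu sc xi beta \<noteq> {0} \<longrightarrow>
        (\<forall>i. \<exists>n::nat. beta i = lam i - of_nat n)) \<and>
     vector_space.dim sc (weight_space B mu sc xi lam) = 1"

definition top_graded ::
  "('i::finite \<Rightarrow> 'i \<Rightarrow> int) \<Rightarrow> ('i \<Rightarrow> int) \<Rightarrow> (complex \<Rightarrow> 'v::ab_group_add \<Rightarrow> 'v)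
   \<Rightarrow> ('i \<Rightarrow> int \<Rightarrow> 'v \<Rightarrow> 'v) \<Rightarrow> bool" where
  "top_graded B mu sc xi \<longleftrightarrow> (\<exists>lam. top_graded_at B mu sc xi lam)"

definition is_submodule ::
  "(complex \<Rightarrow> 'v::ab_group_add \<Rightarrow> 'v) \<Rightarrow> ('i \<Rightarrow> nat \<Rightarrow> 'v \<Rightarrow> 'v) \<Rightarrow> ('i \<Rightarrow> nat \<Rightarrow> 'v \<Rightarrow> 'v)
   \<Rightarrow> ('i \<Rightarrow> int \<Rightarrow> 'v \<Rightarrow> 'v) \<Rightarrow> 'v set \<Rightarrow> bool" where
  "is_submodule sc xp xm xi W \<longleftrightarrow>
     module.subspace sc W \<and>
     (\<forall>i n. \<forall>w\<in>W. xp i n w \<in> W) \<and> (\<forall>i n. \<forall>w\<in>W. xm i n w \<in> W) \<and>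
     (\<forall>i p. \<forall>w\<in>W. xi i p w \<in> W)"

definition co_highest_l_weight ::
  "('i::finite \<Rightarrow> 'i \<Rightarrow> int) \<Rightarrow> ('i \<Rightarrow> int) \<Rightarrow> (complex \<Rightarrow> 'v::ab_group_add \<Rightarrow> 'v)
   \<Rightarrow> ('i \<Rightarrow> nat \<Rightarrow> 'v \<Rightarrow> 'v) \<Rightarrow> ('i \<Rightarrow> nat \<Rightarrow> 'v \<Rightarrow> 'v) \<Rightarrow> ('i \<Rightarrow> int \<Rightarrow> 'v \<Rightarrow> 'v) \<Rightarrow> bool" where
  "co_highest_l_weight B mu sc xp xm xi \<longleftrightarrow>
     (\<exists>lam. top_graded_at B mu sc xi lam \<and>
        (\<forall>W. is_submodule sc xp xm xi W \<and> W \<noteq> {0} \<longrightarrow> weight_space B mu sc xi lam \<subseteq> W))"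

end

theory Submission
  imports Defs "HOL-Library.Function_Algebras"
begin

text \<open>The operators x^+_{i,n} raise weights by \<alpha>_i, the x^-_{i,n} lower them and the \<xi>_{i,p} preserve
  them. If V is of co-highest l-weight, the weight components of a vector killed by all x^+ are again
  killed by all x^+. Such a component u of weight \<beta> generates the submodule obtained by applying
  x^-'s and \<xi>'s to u (the relations [x^+, x^-] = \<xi> and [\<xi>, x^+] keep it stable under x^+), whose
  weights lie in \<beta> + Q_-. It contains V_\<lambda>, so \<beta> = \<lambda>.
  Conversely, starting from a nonzero vector of a submodule, keep applying some x^+ that does not kill
  it. Since all weights lie in \<lambda> + Q_-, this stops after finitely many steps at a nonzero vector
  killed by all x^+, which by hypothesis spans V_\<lambda>.\<close>

definition simple_root :: "'i \<Rightarrow> 'i \<Rightarrow> complex" where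
  "simple_root j = (\<lambda>k. if k = j then 1 else 0)"

lemma pair_root_add: "pair_root B i (b + c) = pair_root B i b + pair_root B i c"
  by (simp add: pair_root_def distrib_right sum.distrib)

lemma pair_root_uminus: "pair_root B i (- b) = - pair_root B i b"
  by (simp add: pair_root_def sum_negf)

lemma pair_root_simple_root: "pair_root B i (simple_root j) = of_int (B i j)"
  by (simp add: pair_root_def simple_root_def if_distrib[of "\<lambda>c. c * _"] cong: if_cong)

definition minus_roots :: "('i \<Rightarrow> complex) \<Rightarrow> ('i \<Rightarrow> nat) \<Rightarrow> 'i \<Rightarrow> complex" where
  "minus_roots b m = (\<lambda>k. b k - of_nat (m k))"

lemma minus_roots_eq_self_iff [simp]: "minus_roots b m = b \<longleftrightarrow> m = 0"
  by (auto simp: minus_roots_def fun_eq_iff)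

lemma minus_roots_zero [simp]: "minus_roots b 0 = b"
  by simp

lemma minus_roots_minus_roots [simp]: "minus_roots (minus_roots b m) n = minus_roots b (m + n)"
  by (simp add: minus_roots_def fun_eq_iff algebra_simps)

lemma minus_roots_diff_simple_root:
  "minus_roots b m - simple_root j = minus_roots b (m(j := Suc (m j)))"
  by (simp add: minus_roots_def simple_root_def fun_eq_iff)

lemma minus_roots_add_simple_root:
  "m j > 0 \<Longrightarrow> minus_roots b m + simple_root j = minus_roots b (m(j := m j - 1))"
  by (simp add: minus_roots_def simple_root_def fun_eq_iff of_nat_diff)

lemma (in module_hom) image_span_subset: "f ` S \<subseteq> m2.span T \<Longrightarrow> f ` m1.span S \<subseteq> m2.span T"
  by (metis m2.span_mono m2.span_span span_image)

locale shifted_yangian_module =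
  fixes B :: "'i::finite \<Rightarrow> 'i \<Rightarrow> int" and mu :: "'i \<Rightarrow> int"
    and sc :: "complex \<Rightarrow> 'v::ab_group_add \<Rightarrow> 'v"
    and xp xm :: "'i \<Rightarrow> nat \<Rightarrow> 'v \<Rightarrow> 'v" and xi :: "'i \<Rightarrow> int \<Rightarrow> 'v \<Rightarrow> 'v"
  assumes yangian_module: "yangian_module B mu sc xp xm xi"
begin

sublocale vector_space sc
  using yangian_module by (simp add: yangian_module_def)

lemma module_hom_xp: "module_hom sc sc (xp i n)"
  and module_hom_xm: "module_hom sc sc (xm i n)"
  and module_hom_xi: "module_hom sc sc (xi i p)"
  using yangian_module by (simp_all add: yangian_module_def module_hom_iff_linear)

lemmas xp_add[simp] = module_hom.add[OF module_hom_xp]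
  and xp_scale[simp] = module_hom.scale[OF module_hom_xp]
  and xp_zero[simp] = module_hom.zero[OF module_hom_xp]
  and xp_sum = module_hom.sum[OF module_hom_xp]
lemmas xi_add[simp] = module_hom.add[OF module_hom_xi]
  and xi_scale[simp] = module_hom.scale[OF module_hom_xi]
  and xi_zero[simp] = module_hom.zero[OF module_hom_xi]

lemma xi_commute: "xi i p (xi j q v) = xi j q (xi i p v)"
proof -
  have "comm (xi i p) (xi j q) v = 0"
    using yangian_module by (simp add: yangian_module_def)
  then show ?thesis
    by (simp add: comm_def)
qed

lemma xp_xm_commute:
  "xp i m (xm j n v) = xm j n (xp i m v) + (if i = j then xi i (int (m + n)) v else 0)"
proof -
  have "comm (xp i m) (xm j n) v = (if i = j then xi i (int (m + n)) v else 0)"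
    using yangian_module by (simp add: yangian_module_def)
  then show ?thesis
    by (simp add: comm_def algebra_simps)
qed

lemma xi_xp_relation:
  "xi i (p + 1) (xp j n v) - xp j n (xi i (p + 1) v) - (xi i p (xp j (n + 1) v) - xp j (n + 1) (xi i p v))
     = sc (dd B i j) (xi i p (xp j n v) + xp j n (xi i p v))"
  using yangian_module unfolding yangian_module_def comm_def anticomm_def by metis

lemma xi_xm_relation:
  "xi i (p + 1) (xm j n v) - xm j n (xi i (p + 1) v) - (xi i p (xm j (n + 1) v) - xm j (n + 1) (xi i p v))
     = sc (- dd B i j) (xi i p (xm j n v) + xm j n (xi i p v))"
  using yangian_module unfolding yangian_module_def comm_def anticomm_def by metis

lemma xi_unit: "xi i (- mu i - 1) v = v"
  using yangian_module by (simp add: yangian_module_def)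

lemma xi_below_unit: "p < - mu i - 1 \<Longrightarrow> xi i p v = 0"
  using yangian_module by (simp add: yangian_module_def)

abbreviation Wt :: "('i \<Rightarrow> complex) \<Rightarrow> 'v set" where
  "Wt \<equiv> weight_space B mu sc xi"

lemma subspace_weight_space: "subspace (Wt b)"
  by (simp add: subspace_def weight_space_def scale_right_distrib scale_left_commute)

lemma xi_weight_space: "v \<in> Wt b \<Longrightarrow> xi k p v \<in> Wt b"
  by (simp add: weight_space_def xi_commute[of _ "- mu _" k p])

lemma weight_space_shift:
  assumes "module_hom sc sc X"
    and "\<And>i v. xi i (- mu i) (X v) = X (xi i (- mu i) v) + sc (pair_root B i c) (X v)"
    and "v \<in> Wt b"
  shows "X v \<in> Wt (b + c)"
  using assms by (simp add: weight_space_def pair_root_add scale_left_distrib module_hom.scale)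

lemma sc_dd_double: "sc (dd B i j) (v + v) = sc (of_int (B i j)) v"
proof -
  have "v + v = sc 2 v"
    by (metis one_add_one scale_left_distrib scale_one)
  then show ?thesis
    by (simp add: dd_def)
qed

lemma xi_xp_commute:
  "xi i (- mu i) (xp j n v) = xp j n (xi i (- mu i) v) + sc (pair_root B i (simple_root j)) (xp j n v)"
proof -
  have "xi i (- mu i) (xp j n v) - xp j n (xi i (- mu i) v) = sc (dd B i j) (xp j n v + xp j n v)"
    using xi_xp_relation[of i "- mu i - 1" j n v] by (simp add: xi_unit)
  then show ?thesis
    unfolding sc_dd_double by (simp add: pair_root_simple_root algebra_simps)
qed

lemma xi_xm_commute:
  "xi i (- mu i) (xm j n v) = xm j n (xi i (- mu i) v) + sc (pair_root B i (- simple_root j)) (xm j n v)"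
proof -
  have "xi i (- mu i) (xm j n v) - xm j n (xi i (- mu i) v) = sc (- dd B i j) (xm j n v + xm j n v)"
    using xi_xm_relation[of i "- mu i - 1" j n v] by (simp add: xi_unit)
  then show ?thesis
    unfolding scale_minus_left sc_dd_double by (simp add: pair_root_uminus pair_root_simple_root algebra_simps)
qed

lemma xp_weight_space: "v \<in> Wt b \<Longrightarrow> xp j n v \<in> Wt (b + simple_root j)"
  by (rule weight_space_shift[OF module_hom_xp xi_xp_commute])

lemma xm_weight_space: "v \<in> Wt b \<Longrightarrow> xm j n v \<in> Wt (b - simple_root j)"
  using weight_space_shift[OF module_hom_xm xi_xm_commute] by (metis diff_conv_add_uminus)

lemma span_weight_spaces_decomposition:
  assumes "v \<in> span (\<Union>b\<in>A. Wt b)"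
  shows "\<exists>S f. finite S \<and> S \<subseteq> A \<and> (\<forall>b\<in>S. f b \<in> Wt b) \<and> v = sum f S"
  using assms
proof (induction rule: span_induct_alt)
  case base
  show ?case
    by (intro exI[of _ "{}"]) simp
next
  case (step c x y)
  then obtain a S f where a: "a \<in> A" "x \<in> Wt a"
    and S: "finite S" "S \<subseteq> A" "\<forall>b\<in>S. f b \<in> Wt b" "y = sum f S"
    by blast
  define g where "g = f(a := sc c x + (if a \<in> S then f a else 0))"
  have g_off_a: "sum g (S - {a}) = sum f (S - {a})"
    by (intro sum.cong) (auto simp: g_def)
  have "sum g (insert a S) = g a + sum g (S - {a})"
    using S(1) by (simp add: sum.insert_remove)
  also have "\<dots> = sc c x + ((if a \<in> S then f a else 0) + sum f (S - {a}))"
    unfolding g_off_a by (simp add: g_def add.assoc)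
  also have "\<dots> = sc c x + sum f S"
    using S(1) by (cases "a \<in> S") (simp_all add: sum.remove)
  finally have "sum g (insert a S) = sc c x + sum f S" .
  moreover have "\<forall>b\<in>insert a S. g b \<in> Wt b"
    using a S(3) subspace_weight_space
    by (auto simp: g_def intro: subspace_add subspace_scale subspace_0)
  ultimately show ?case
    using a S by (intro exI[of _ "insert a S"] exI[of _ g]) auto
qed

inductive_set lowering_closure :: "'v \<Rightarrow> 'v set" for u where
  generator: "u \<in> lowering_closure u"
| zero: "0 \<in> lowering_closure u"
| add: "a \<in> lowering_closure u \<Longrightarrow> b \<in> lowering_closure u \<Longrightarrow> a + b \<in> lowering_closure u"
| scale: "a \<in> lowering_closure u \<Longrightarrow> sc c a \<in> lowering_closure u"
| xm: "a \<in> lowering_closure u \<Longrightarrow> xm j n a \<in> lowering_closure u"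
| xi: "a \<in> lowering_closure u \<Longrightarrow> xi k p a \<in> lowering_closure u"

lemma subspace_lowering_closure: "subspace (lowering_closure u)"
  by (auto simp: subspace_def intro: lowering_closure.intros)

lemma xp_xi_mem_subspace:
  assumes W: "subspace W" "\<And>k p w. w \<in> W \<Longrightarrow> xi k p w \<in> W"
    and a: "a \<in> W" "\<And>n. xp i n a \<in> W"
  shows "xp i n (xi k p a) \<in> W"
proof (cases "p < - mu k - 1")
  case True
  then show ?thesis
    using W by (simp add: xi_below_unit subspace_0)
next
  case False
  then have "- mu k - 1 \<le> p"
    by simp
  then have "\<forall>n. xp i n (xi k p a) \<in> W"
  proof (induction p rule: int_ge_induct)
    case base
    then show ?case
      using a by (simp add: xi_unit)
  next
    case (step q)
    (* the \<xi>-x^+ relation expresses x^+ \<xi>_{k,q+1} through terms involving only \<xi>_{k,q} *)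
    show ?case
    proof
      fix n
      have "xp i n (xi k (q + 1) a) = xi k (q + 1) (xp i n a) - (xi k q (xp i (n + 1) a) - xp i (n + 1) (xi k q a))
          - sc (dd B k i) (xi k q (xp i n a) + xp i n (xi k q a))"
        using xi_xp_relation[of k q i n a] by (metis add_diff_cancel_left' diff_add_cancel diff_diff_eq2)
      then show "xp i n (xi k (q + 1) a) \<in> W"
        using W a step.IH by (simp add: subspace_diff subspace_add subspace_scale)
    qed
  qed
  then show ?thesis
    by blast
qed

lemma xp_lowering_closure:
  assumes "\<forall>i n. xp i n u = 0" and "a \<in> lowering_closure u"
  shows "xp i n a \<in> lowering_closure u"
  using assms(2)
proof (induction arbitrary: i n)
  case (xm a j m)
  then show ?case
    unfolding xp_xm_commute by (auto intro: lowering_closure.intros)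
next
  case (xi a k p)
  then show ?case
    using subspace_lowering_closure by (auto intro: xp_xi_mem_subspace lowering_closure.intros)
qed (use assms(1) in \<open>auto intro: lowering_closure.intros\<close>)

lemma is_submodule_lowering_closure:
  "\<forall>i n. xp i n u = 0 \<Longrightarrow> is_submodule sc xp xm xi (lowering_closure u)"
  by (auto simp: is_submodule_def subspace_lowering_closure intro: lowering_closure.intros xp_lowering_closure)

lemma lowering_closure_subset_span:
  assumes "u \<in> Wt b"
  shows "lowering_closure u \<subseteq> span (\<Union>m. Wt (minus_roots b m))"
proof
  fix a
  assume "a \<in> lowering_closure u"
  then show "a \<in> span (\<Union>m. Wt (minus_roots b m))"
  proof induction
    case generator
    have "u \<in> Wt (minus_roots b 0)"
      using assms by simp
    then show ?case
      by (intro span_base UN_I[OF UNIV_I])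
  next
    case (xm a j n)
    have "xm j n v \<in> span (\<Union>m. Wt (minus_roots b m))" if "v \<in> Wt (minus_roots b m)" for v m
    proof -
      have "xm j n v \<in> Wt (minus_roots b (m(j := Suc (m j))))"
        using xm_weight_space[OF that] by (simp add: minus_roots_diff_simple_root)
      then show ?thesis
        by (intro span_base UN_I[OF UNIV_I])
    qed
    then have "xm j n ` span (\<Union>m. Wt (minus_roots b m)) \<subseteq> span (\<Union>m. Wt (minus_roots b m))"
      by (intro module_hom.image_span_subset[OF module_hom_xm] image_subsetI) (elim UN_E)
    then show ?case
      using xm.IH by (rule subsetD[OF _ imageI])
  next
    case (xi a k p)
    have "xi k p ` span (\<Union>m. Wt (minus_roots b m)) \<subseteq> span (\<Union>m. Wt (minus_roots b m))"
      by (intro module_hom.image_span_subset[OF module_hom_xi] image_subsetI)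
        (elim UN_E, intro span_base UN_I[OF UNIV_I] xi_weight_space)
    then show ?case
      using xi.IH by (rule subsetD[OF _ imageI])
  qed (auto intro: span_zero span_add span_scale)
qed

end

locale top_graded_module = shifted_yangian_module B mu sc xp xm xi
  for B :: "'i::finite \<Rightarrow> 'i \<Rightarrow> int" and mu sc and xp xm :: "'i \<Rightarrow> nat \<Rightarrow> 'v::ab_group_add \<Rightarrow> 'v" and xi +
  fixes lam :: "'i \<Rightarrow> complex"
  assumes top_graded: "top_graded_at B mu sc xi lam"
begin

lemma weight_decomposition: "\<exists>S f. finite S \<and> (\<forall>b\<in>S. f b \<in> Wt b) \<and> v = sum f S"
  using top_graded by (simp add: top_graded_at_def weight_module_def)

lemma weight_sum_eq_0D:
  "finite S \<Longrightarrow> \<forall>b\<in>S. f b \<in> Wt b \<Longrightarrow> sum f S = 0 \<Longrightarrow> b \<in> S \<Longrightarrow> f b = 0"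
  using top_graded by (simp add: top_graded_at_def weight_module_def)

lemma weight_space_span_disjoint:
  assumes "v \<in> Wt c" and "v \<in> span (\<Union>b\<in>A. Wt b)" and "c \<notin> A"
  shows "v = 0"
proof -
  obtain S f where S: "finite S" "S \<subseteq> A" "\<forall>b\<in>S. f b \<in> Wt b" "v = sum f S"
    using span_weight_spaces_decomposition[OF assms(2)] by blast
  have c_S: "c \<notin> S"
    using S(2) assms(3) by blast
  define g where "g = f(c := - v)"
  have "sum g S = sum f S"
    using c_S by (intro sum.cong) (auto simp: g_def)
  then have "sum g (insert c S) = 0"
    using S c_S by (simp add: g_def)
  moreover have "\<forall>b\<in>insert c S. g b \<in> Wt b"
    using S(3) assms(1) subspace_weight_space by (auto simp: g_def intro: subspace_neg)
  ultimately have "g c = 0"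
    using S(1) by (intro weight_sum_eq_0D[of "insert c S" g]) auto
  then show ?thesis
    by (simp add: g_def)
qed

lemma weight_below_top:
  assumes "v \<in> Wt b" and "v \<noteq> 0"
  shows "\<exists>m. b = minus_roots lam m"
proof -
  have "\<forall>i. \<exists>n::nat. b i = lam i - of_nat n"
    using assms top_graded unfolding top_graded_at_def by blast
  then obtain m where "\<forall>i. b i = lam i - of_nat (m i)"
    by metis
  then show ?thesis
    by (intro exI[of _ m]) (simp add: minus_roots_def fun_eq_iff)
qed

lemma top_weight_space_nonzero: "\<exists>v\<in>Wt lam. v \<noteq> 0"
proof (rule ccontr)
  assume "\<not> (\<exists>v\<in>Wt lam. v \<noteq> 0)"
  then have "Wt lam = {0}"
    using subspace_0[OF subspace_weight_space] by blast
  moreover have "dim {0} = 0"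
    using dim_eq_card[of "{}" "{0}"] independent_empty by simp
  ultimately show False
    using top_graded by (simp add: top_graded_at_def)
qed

lemma top_weight_space_spanned:
  assumes "v \<in> Wt lam" and "v \<noteq> 0"
  shows "Wt lam \<subseteq> span {v}"
proof -
  obtain Bs where Bs: "{v} \<subseteq> Bs" "Bs \<subseteq> Wt lam" "independent Bs" "Wt lam \<subseteq> span Bs"
    using maximal_independent_subset_extend[of "{v}" "Wt lam"] assms by auto
  then have "card Bs = 1"
    using top_graded basis_card_eq_dim by (simp add: top_graded_at_def)
  then obtain x where "Bs = {x}"
    by (rule card_1_singletonE)
  then have "Bs = {v}"
    using Bs(1) by simp
  then show ?thesis
    using Bs(4) by simp
qed

lemma top_weight_unique:
  assumes "top_graded_at B mu sc xi lam'"
  shows "lam' = lam"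
proof -
  interpret top': top_graded_module B mu sc xp xm xi lam'
    using assms by unfold_locales
  obtain v' where "v' \<in> Wt lam'" "v' \<noteq> 0"
    using top'.top_weight_space_nonzero by blast
  then obtain m where m: "lam' = minus_roots lam m"
    using weight_below_top by blast
  obtain v where "v \<in> Wt lam" "v \<noteq> 0"
    using top_weight_space_nonzero by blast
  then obtain n where "lam = minus_roots lam' n"
    using top'.weight_below_top by blast
  then have "minus_roots lam (m + n) = lam"
    using m by simp
  then have "m = 0"
    by simp
  then show ?thesis
    using m by simp
qed

lemma xp_weight_space_vanish:
  assumes "v \<in> Wt (minus_roots lam m)" and "m i = 0"
  shows "xp i n v = 0"
proof (rule ccontr)
  assume "xp i n v \<noteq> 0"
  then obtain m' where "minus_roots lam m + simple_root i = minus_roots lam m'"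
    using weight_below_top xp_weight_space[OF assms(1)] by blast
  then have "(minus_roots lam m + simple_root i) i = minus_roots lam m' i"
    by simp
  then have "lam i + 1 = lam i - of_nat (m' i)"
    using assms(2) by (simp add: minus_roots_def simple_root_def)
  then have "of_nat (Suc (m' i)) = (0 :: complex)"
    by (simp add: algebra_simps)
  then show False
    by (simp only: of_nat_eq_0_iff)
qed

lemma xp_top_weight_space_eq_0: "v \<in> Wt lam \<Longrightarrow> xp i n v = 0"
  using xp_weight_space_vanish[of v 0] by simp

lemma xp_weight_components_eq_0:
  assumes S: "finite S" "\<forall>b\<in>S. f b \<in> Wt b" and "xp i n (sum f S) = 0" and "a \<in> S"
  shows "xp i n (f a) = 0"
proof (rule weight_space_span_disjoint)
  show "xp i n (f a) \<in> Wt (a + simple_root i)"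
    using S(2) \<open>a \<in> S\<close> by (simp add: xp_weight_space)
  have "xp i n (f b) \<in> span (\<Union>c\<in>(\<lambda>b. b + simple_root i) ` (S - {a}). Wt c)"
    if "b \<in> S - {a}" for b
    using that S(2) by (intro span_base UN_I[OF imageI[OF that]] xp_weight_space) auto
  then have "(\<Sum>b\<in>S - {a}. xp i n (f b)) \<in> span (\<Union>c\<in>(\<lambda>b. b + simple_root i) ` (S - {a}). Wt c)"
    by (rule span_sum)
  moreover have "xp i n (f a) = - (\<Sum>b\<in>S - {a}. xp i n (f b))"
    using assms(3,4) S(1) by (simp add: xp_sum sum.remove eq_neg_iff_add_eq_0)
  ultimately show "xp i n (f a) \<in> span (\<Union>c\<in>(\<lambda>b. b + simple_root i) ` (S - {a}). Wt c)"
    by (simp only: span_neg)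
  show "a + simple_root i \<notin> (\<lambda>b. b + simple_root i) ` (S - {a})"
    by (simp add: image_iff)
qed

lemma highest_weight_vector_at_top:
  assumes co_highest: "\<forall>W. is_submodule sc xp xm xi W \<and> W \<noteq> {0} \<longrightarrow> Wt lam \<subseteq> W"
    and u: "u \<in> Wt b" "u \<noteq> 0" "\<forall>i n. xp i n u = 0"
  shows "b = lam"
proof (rule ccontr)
  assume "b \<noteq> lam"
  obtain m where m: "b = minus_roots lam m"
    using weight_below_top u by blast
  have "lam \<notin> range (minus_roots b)"
  proof
    assume "lam \<in> range (minus_roots b)"
    then obtain n where "lam = minus_roots b n"
      by blast
    then have "minus_roots lam (m + n) = lam"
      using m by simp
    then show False
      using m \<open>b \<noteq> lam\<close> by simp
  qed
  have "lowering_closure u \<noteq> {0}"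
    using lowering_closure.generator u(2) by blast
  then have top_below_b: "Wt lam \<subseteq> span (\<Union>n. Wt (minus_roots b n))"
    using co_highest is_submodule_lowering_closure[OF u(3)] lowering_closure_subset_span[OF u(1)]
    by blast
  obtain v where v: "v \<in> Wt lam" "v \<noteq> 0"
    using top_weight_space_nonzero by blast
  have "v \<in> span (\<Union>c\<in>range (minus_roots b). Wt c)"
    using subsetD[OF top_below_b v(1)] by (simp only: image_image)
  then have "v = 0"
    by (rule weight_space_span_disjoint[OF v(1) _ \<open>lam \<notin> range (minus_roots b)\<close>])
  then show False
    using v(2) by simp
qed

lemma co_highest_imp_top_space_eq_kernel:
  assumes "co_highest_l_weight B mu sc xp xm xi"
  shows "Wt lam = {v. \<forall>i n. xp i n v = 0}"
proof (intro equalityI subsetI CollectI allI)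
  fix v i n
  assume "v \<in> Wt lam"
  then show "xp i n v = 0"
    by (rule xp_top_weight_space_eq_0)
next
  fix v
  assume "v \<in> {v. \<forall>i n. xp i n v = 0}"
  then have v: "\<forall>i n. xp i n v = 0"
    by simp
  obtain lam' where top': "top_graded_at B mu sc xi lam'"
    and co_highest: "\<forall>W. is_submodule sc xp xm xi W \<and> W \<noteq> {0} \<longrightarrow> Wt lam' \<subseteq> W"
    using assms unfolding co_highest_l_weight_def by blast
  from top' have "lam' = lam"
    by (rule top_weight_unique)
  obtain S f where S: "finite S" "\<forall>b\<in>S. f b \<in> Wt b" "v = sum f S"
    using weight_decomposition by blast
  have "f b \<in> Wt lam" if "b \<in> S" for b
  proof (cases "f b = 0")
    case False
    have "\<forall>i n. xp i n (f b) = 0"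
      using xp_weight_components_eq_0[OF S(1,2)] v S(3) that by blast
    moreover have "f b \<in> Wt b"
      using S(2) that by blast
    ultimately have "b = lam"
      using highest_weight_vector_at_top[OF co_highest[unfolded \<open>lam' = lam\<close>]] False by blast
    then show ?thesis
      using \<open>f b \<in> Wt b\<close> by simp
  qed (simp add: subspace_0[OF subspace_weight_space])
  then show "v \<in> Wt lam"
    unfolding S(3) by (rule subspace_sum[OF subspace_weight_space])
qed

definition depth_le_span :: "nat \<Rightarrow> 'v set" where
  "depth_le_span N = span (\<Union>m\<in>{m. sum m UNIV \<le> N}. Wt (minus_roots lam m))"

lemma depth_le_span_0: "depth_le_span 0 = Wt lam"
proof -
  have "{m :: 'i \<Rightarrow> nat. sum m UNIV \<le> 0} = {0}"
    by (auto simp: fun_eq_iff)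
  then show ?thesis
    by (simp add: depth_le_span_def subspace_weight_space)
qed

lemma mem_depth_le_span: "\<exists>N. v \<in> depth_le_span N"
proof -
  obtain S f where S: "finite S" "\<forall>b\<in>S. f b \<in> Wt b" "v = sum f S"
    using weight_decomposition by blast
  have "\<forall>b\<in>S. \<exists>m. f b = 0 \<or> b = minus_roots lam m"
    using weight_below_top S(2) by blast
  then obtain m where m: "\<forall>b\<in>S. f b = 0 \<or> b = minus_roots lam (m b)"
    by metis
  define N where "N = (\<Sum>b\<in>S. sum (m b) UNIV)"
  have "f b \<in> depth_le_span N" if "b \<in> S" for b
  proof (cases "f b = 0")
    case False
    then have "b = minus_roots lam (m b)"
      using m that by blast
    then have "f b \<in> Wt (minus_roots lam (m b))"
      using S(2) that by simp
    moreover have "sum (m b) UNIV \<le> N"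
      unfolding N_def using S(1) that by (auto intro: member_le_sum)
    ultimately show ?thesis
      unfolding depth_le_span_def by (intro span_base UN_I[of "m b"]) auto
  qed (simp add: depth_le_span_def span_zero)
  then have "sum f S \<in> depth_le_span N"
    unfolding depth_le_span_def by (rule span_sum)
  then show ?thesis
    unfolding S(3) by blast
qed

lemma xp_depth_le_span_Suc:
  assumes "v \<in> depth_le_span (Suc N)"
  shows "xp i n v \<in> depth_le_span N"
proof -
  have "xp i n w \<in> depth_le_span N" if "w \<in> Wt (minus_roots lam m)" "sum m UNIV \<le> Suc N" for w m
  proof (cases "m i = 0")
    case True
    then show ?thesis
      using xp_weight_space_vanish[OF that(1)] by (simp add: depth_le_span_def span_zero)
  next
    case False
    define m' where "m' = m(i := m i - 1)"
    have "sum m UNIV = m i + sum m (UNIV - {i})" and "sum m' UNIV = m' i + sum m' (UNIV - {i})"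
      by (simp_all add: sum.remove)
    moreover have "sum m' (UNIV - {i}) = sum m (UNIV - {i})"
      by (intro sum.cong) (auto simp: m'_def)
    ultimately have "sum m' UNIV \<le> N"
      using that(2) False by (simp add: m'_def)
    moreover have "minus_roots lam m + simple_root i = minus_roots lam m'"
      using False by (simp add: minus_roots_add_simple_root m'_def)
    then have "xp i n w \<in> Wt (minus_roots lam m')"
      using xp_weight_space[OF that(1), of i n] by simp
    ultimately show ?thesis
      unfolding depth_le_span_def by (intro span_base UN_I[of m']) auto
  qed
  then have "xp i n ` depth_le_span (Suc N) \<subseteq> depth_le_span N"
    unfolding depth_le_span_def
    by (intro module_hom.image_span_subset[OF module_hom_xp] image_subsetI) (auto simp: depth_le_span_def)
  then show ?thesis
    using assms by (rule subsetD[OF _ imageI])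
qed

lemma top_space_subset_submodule:
  assumes kernel: "Wt lam = {v. \<forall>i n. xp i n v = 0}"
    and W: "is_submodule sc xp xm xi W" "W \<noteq> {0}"
  shows "Wt lam \<subseteq> W"
proof -
  have W_subspace: "subspace W"
    using W(1) by (simp add: is_submodule_def)
  have top_in_W: "Wt lam \<subseteq> W" if "w \<in> Wt lam" "w \<noteq> 0" "w \<in> W" for w
    using top_weight_space_spanned[OF that(1,2)] span_minimal[of "{w}" W] W_subspace that(3) by blast
  have climb: "Wt lam \<subseteq> W" if "w \<in> W" "w \<noteq> 0" "w \<in> depth_le_span N" for w N
    using that
  proof (induction N arbitrary: w)
    case 0
    then show ?case
      using top_in_W depth_le_span_0 by blast
  next
    case (Suc N)
    show ?case
    proof (cases "\<forall>i n. xp i n w = 0")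
      case True
      then show ?thesis
        using Suc.prems kernel top_in_W by blast
    next
      case False
      then obtain i n where "xp i n w \<noteq> 0"
        by blast
      moreover have "xp i n w \<in> W"
        using W(1) Suc.prems(1) by (simp add: is_submodule_def)
      ultimately show ?thesis
        using Suc.IH xp_depth_le_span_Suc[OF Suc.prems(3)] by blast
    qed
  qed
  obtain w where "w \<in> W" "w \<noteq> 0"
    using W(2) subspace_0[OF W_subspace] by blast
  then show ?thesis
    using climb mem_depth_le_span by blast
qed

lemma top_space_eq_kernel_imp_co_highest:
  assumes "Wt lam = {v. \<forall>i n. xp i n v = 0}"
  shows "co_highest_l_weight B mu sc xp xm xi"
  unfolding co_highest_l_weight_def
  using top_graded top_space_subset_submodule[OF assms] by blast

end

theorem lemma4p6:
  fixes B :: "'i::finite \<Rightarrow> 'i \<Rightarrow> int" and mu :: "'i \<Rightarrow> int"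
    and sc :: "complex \<Rightarrow> 'v::ab_group_add \<Rightarrow> 'v"
    and xp xm :: "'i \<Rightarrow> nat \<Rightarrow> 'v \<Rightarrow> 'v" and xi :: "'i \<Rightarrow> int \<Rightarrow> 'v \<Rightarrow> 'v"
    and lam :: "'i \<Rightarrow> complex"
  assumes "simple_cartan_datum B"
    and "yangian_module B mu sc xp xm xi"
    and "top_graded_at B mu sc xi lam"
  shows "co_highest_l_weight B mu sc xp xm xi \<longleftrightarrow>
         weight_space B mu sc xi lam = {v. \<forall>i n. xp i n v = 0}"
proof -
  interpret top_graded_module B mu sc xp xm xi lam
    by unfold_locales (fact assms)+
  show ?thesis
    using co_highest_imp_top_space_eq_kernel top_space_eq_kernel_imp_co_highest by blast
qed

end
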